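(* Let $v\in \mathbb{D}_\delta$. Fix a decomposition $v(x)=\mathcal V(x_3)+{\bf Q}(x_3)(x_1{\bf e}_1+x_2{\bf e}_2)+\overline{\overline v}(x)$ of $v$ on the rod $B_\delta$ as described in the context, set $\mathcal W(x_3)=\mathcal V(x_3)-x_3{\bf e}_3$, and for $x_3\in[-\delta,L]$ define $$\mathcal W^{(m)}(x_3)=\mathcal W(0)+\int_0^{x_3}({\bf Q}(t)-{\bf I}_3){\bf e}_3\,dt,\qquad \mathcal W^{(s)}=\mathcal W-\mathcal W^{(m)}.$$ Then there is a constant $C$ independent of $\delta$ such that $$\|\mathcal W^{(s)}\|_{H^1(-\delta,L;\mathbb R^3)}\le \frac{C}{\delta}{\bf d}(v,B_\delta),\qquad \|\mathcal W^{(m)}_\alpha-\mathcal W_\alpha(0)\|_{H^2(-\delta,L)}\le \frac{C}{\delta^2}{\bf d}(v,B_\delta)+C|||{\bf Q}(0)-{\bf I}_3|||\ (\alpha=1,2),$$ $$\|\mathcal W^{(m)}_3-\mathcal W^{(m)}_3(0)\|_{H^1(-\delta,L)}\le \frac{C}{\delta^4}[{\bf d}(v,B_\delta)]^2+C|({\bf Q}(0)-{\bf I}_3){\bf e}_3\cdot{\bf e}_3|,$$ $$\Big\|\frac{d\mathcal W^{(m)}_3}{dx_3}\Big\|_{L^2(-\delta,\delta)}\le \frac{C}{\delta^{5/2}}[{\bf d}(v,B_\delta)]^2+C\delta^{1/2}|({\bf Q}(0)-{\bf I}_3){\bf e}_3\cdot{\bf e}_3|.$$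
   Context: Let $\omega\subset\mathbb R^2$ be a bounded domain with Lipschitz boundary containing the origin $O$; let $D$ be the open unit disc centered at $O$, with $\overline D\subset\omega$; let $\gamma_0\subset\partial\omega$ be an open set made of finitely many connected components with pairwise disjoint closures; fix $L>0$. For $\delta>0$ let $D_\delta$ be the disc of radius $\delta$ centered at $O$, $\Omega_\delta=\omega\times(-\delta,\delta)$ (plate), $B_\delta=D_\delta\times(-\delta,L)$ (rod), $\mathcal S_\delta=\Omega_\delta\cup B_\delta$, $\Gamma_{0,\delta}=\gamma_0\times(-\delta,\delta)$, and $\mathbb D_\delta=\{v\in H^1(\mathcal S_\delta;\mathbb R^3): v=I_d \text{ on }\Gamma_{0,\delta}\}$, where $I_d$ is the identity map of $\mathbb R^3$. $({\bf e}_1,{\bf e}_2,{\bf e}_3)$ is the canonical basis, ${\bf I}_3$ the identity matrix, $|||\cdot|||$ the Frobenius norm, and ${\bf d}(v,\mathcal O)=\|\mathrm{dist}(\nabla v,SO(3))\|_{L^2(\mathcal O)}$. Rod decomposition (known result): every $v\in H^1(B_\delta;\mathbb R^3)$ can be written $v(x)=\mathcal V(x_3)+{\bf Q}(x_3)(x_1{\bf e}_1+x_2{\bf e}_2)+\overline{\overline v}(x)$ with $\mathcal V(x_3)=\frac1{|D_\delta|}\int_{D_\delta}v(x)\,dx_1dx_2\in H^1(-\delta,L;\mathbb R^3)$, ${\bf Q}\in H^1(-\delta,L;SO(3))$, $\overline{\overline v}\in H^1(B_\delta;\mathbb R^3)$, and, with $C$ independent of $\delta$ and $L$: $\|\overline{\overline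 v}\|_{L^2}\le C\delta{\bf d}(v,B_\delta)$, $\|\nabla\overline{\overline v}\|_{L^2}\le C{\bf d}(v,B_\delta)$, $\|d{\bf Q}/dx_3\|_{L^2(-\delta,L)}\le C\delta^{-2}{\bf d}(v,B_\delta)$, $\|d\mathcal V/dx_3-{\bf Q}{\bf e}_3\|_{L^2(-\delta,L)}\le C\delta^{-1}{\bf d}(v,B_\delta)$, $\|\nabla v-{\bf Q}\|_{L^2(B_\delta)}\le C{\bf d}(v,B_\delta)$. Such a decomposition is fixed. *)

theory Defs
  imports "HOL-Analysis.Analysis"
begin

text \<open>The rotation group SO(3); matrices are of type real^3^3, the norm on this
type is the Frobenius norm.\<close>
definition SO3 :: "(real^3^3) set" where
  "SO3 = {R. orthogonal_matrix R \<and> det R = 1}"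

definition proj12 :: "real^3 \<Rightarrow> real^2" where
  "proj12 x = vector [x$1, x$2]"

definition L2_on :: "'a::euclidean_space set \<Rightarrow> ('a \<Rightarrow> 'b::euclidean_space) \<Rightarrow> bool" where
  "L2_on S f \<longleftrightarrow> set_borel_measurable lebesgue S f
      \<and> set_integrable lebesgue S (\<lambda>x. (norm (f x))^2)"

definition L2norm :: "'a::euclidean_space set \<Rightarrow> ('a \<Rightarrow> 'b::euclidean_space) \<Rightarrow> real" where
  "L2norm S f = sqrt (LINT x:S|lebesgue. (norm (f x))^2)"

text \<open>One-dimensional H^1(a,b): f (its continuous representative) is absolutely continuous
  with L^2 derivative g, i.e. g is the weak derivative of f on (a,b).\<close>
definition H1_1d :: "real \<Rightarrow> real \<Rightarrow> (real \<Rightarrow> 'b::euclidean_space) \<Rightarrow> (real \<Rightarrow> 'b) \<Rightarrow> bool" where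
  "H1_1d a b f g \<longleftrightarrow> L2_on {a<..<b} f \<and> L2_on {a<..<b} g
      \<and> set_integrable lebesgue {a..b} g
      \<and> (\<forall>x y. a \<le> x \<longrightarrow> x \<le> y \<longrightarrow> y \<le> b \<longrightarrow> f y - f x = (LINT t:{x..y}|lebesgue. g t))"

definition test_fun :: "(real^3) set \<Rightarrow> (real^3 \<Rightarrow> real) \<Rightarrow> (real^3 \<Rightarrow> real^3) \<Rightarrow> bool" where
  "test_fun U \<phi> \<phi>' \<longleftrightarrow> (\<forall>x. (\<phi> has_derivative (\<lambda>h. \<phi>' x \<bullet> h)) (at x))
      \<and> continuous_on UNIV \<phi>'
      \<and> compact (closure {x. \<phi> x \<noteq> 0}) \<and> closure {x. \<phi> x \<noteq> 0} \<subseteq> U"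

text \<open>H^1(U;R^3) with weak gradient Dv, (Dv x)$i$j = d v_i / d x_j.\<close>
definition H1_3d :: "(real^3) set \<Rightarrow> (real^3 \<Rightarrow> real^3) \<Rightarrow> (real^3 \<Rightarrow> real^3^3) \<Rightarrow> bool" where
  "H1_3d U v Dv \<longleftrightarrow> L2_on U v \<and> L2_on U Dv
     \<and> (\<forall>\<phi> \<phi>'. test_fun U \<phi> \<phi>' \<longrightarrow> (\<forall>i j.
          (LINT x:U|lebesgue. (v x $ i) * (\<phi>' x $ j)) = - (LINT x:U|lebesgue. (Dv x $ i $ j) * \<phi> x)))"

definition lipschitz_domain :: "(real^2) set \<Rightarrow> bool" where
  "lipschitz_domain \<omega> \<longleftrightarrow> open \<omega> \<and> connected \<omega> \<and> bounded \<omega> \<and> \<omega> \<noteq> {}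
     \<and> (\<forall>p \<in> frontier \<omega>. \<exists>r>0. \<exists>R::real^2^2. \<exists>g::real \<Rightarrow> real. \<exists>K.
          orthogonal_matrix R \<and> lipschitz_on K UNIV g
          \<and> (\<forall>x \<in> ball p r. x \<in> \<omega> \<longleftrightarrow> (R *v (x - p)) $ 2 < g ((R *v (x - p)) $ 1)))"

definition plate :: "(real^2) set \<Rightarrow> real \<Rightarrow> (real^3) set" where
  "plate \<omega> \<delta> = {x. proj12 x \<in> \<omega> \<and> -\<delta> < x$3 \<and> x$3 < \<delta>}"

definition rod :: "real \<Rightarrow> real \<Rightarrow> (real^3) set" where
  "rod L \<delta> = {x. (x$1)^2 + (x$2)^2 < \<delta>^2 \<and> -\<delta> < x$3 \<and> x$3 < L}"

definition struct :: "(real^2) set \<Rightarrow> real \<Rightarrow> real \<Rightarrow> (real^3) set" where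
  "struct \<omega> L \<delta> = plate \<omega> \<delta> \<union> rod L \<delta>"

definition Gamma0 :: "(real^2) set \<Rightarrow> real \<Rightarrow> (real^3) set" where
  "Gamma0 \<gamma>0 \<delta> = {x. proj12 x \<in> \<gamma>0 \<and> -\<delta> < x$3 \<and> x$3 < \<delta>}"

text \<open>v \<in> D_delta (with weak gradient Dv): v \<in> H^1(S_delta) and v = I_d on Gamma_{0,delta}
  in the trace sense, expressed as: v - I_d extended by 0 across Gamma_{0,delta}
  is H^1 on a neighbourhood of Gamma_{0,delta} united with S_delta.\<close>
definition in_D :: "(real^2) set \<Rightarrow> (real^2) set \<Rightarrow> real \<Rightarrow> real \<Rightarrow> (real^3 \<Rightarrow> real^3) \<Rightarrow> (real^3 \<Rightarrow> real^3^3) \<Rightarrow> bool" where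
  "in_D \<omega> \<gamma>0 L \<delta> v Dv \<longleftrightarrow> H1_3d (struct \<omega> L \<delta>) v Dv
     \<and> (\<exists>V. open V \<and> Gamma0 \<gamma>0 \<delta> \<subseteq> V
          \<and> H1_3d (struct \<omega> L \<delta> \<union> V)
               (\<lambda>x. if x \<in> struct \<omega> L \<delta> then v x - x else 0)
               (\<lambda>x. if x \<in> struct \<omega> L \<delta> then Dv x - mat 1 else 0))"

definition dSO :: "real \<Rightarrow> real \<Rightarrow> (real^3 \<Rightarrow> real^3^3) \<Rightarrow> real" where
  "dSO L \<delta> Dv = L2norm (rod L \<delta>) (\<lambda>x. infdist (Dv x) SO3)"

text \<open>The rod decomposition v = V(x3) + Q(x3)(x1 e1 + x2 e2) + vbar on B_delta,
  with the estimates of the known result (constant C0).\<close>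
definition rod_decomposition ::
  "real \<Rightarrow> real \<Rightarrow> real \<Rightarrow> (real^3 \<Rightarrow> real^3) \<Rightarrow> (real^3 \<Rightarrow> real^3^3)
   \<Rightarrow> (real \<Rightarrow> real^3) \<Rightarrow> (real \<Rightarrow> real^3) \<Rightarrow> (real \<Rightarrow> real^3^3) \<Rightarrow> (real \<Rightarrow> real^3^3)
   \<Rightarrow> (real^3 \<Rightarrow> real^3) \<Rightarrow> (real^3 \<Rightarrow> real^3^3) \<Rightarrow> bool" where
  "rod_decomposition C0 L \<delta> v Dv V dV Q dQ vb Dvb \<longleftrightarrow>
     (AE t in lebesgue. t \<in> {-\<delta><..<L} \<longrightarrow>
        V t = (1 / (pi * \<delta>^2)) *\<^sub>R (LINT y:ball (0::real^2) \<delta>|lebesgue. v (vector [y$1, y$2, t])))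
   \<and> H1_1d (-\<delta>) L V dV
   \<and> H1_1d (-\<delta>) L Q dQ \<and> (\<forall>t \<in> {-\<delta>..L}. Q t \<in> SO3)
   \<and> H1_3d (rod L \<delta>) vb Dvb
   \<and> (AE x in lebesgue. x \<in> rod L \<delta> \<longrightarrow>
        v x = V (x$3) + Q (x$3) *v vector [x$1, x$2, 0] + vb x)
   \<and> L2norm (rod L \<delta>) vb \<le> C0 * \<delta> * dSO L \<delta> Dv
   \<and> L2norm (rod L \<delta>) Dvb \<le> C0 * dSO L \<delta> Dv
   \<and> L2norm {-\<delta><..<L} dQ \<le> C0 / \<delta>^2 * dSO L \<delta> Dv
   \<and> L2norm {-\<delta><..<L} (\<lambda>t. dV t - Q t *v axis 3 1) \<le> C0 / \<delta> * dSO L \<delta> Dv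
   \<and> L2norm (rod L \<delta>) (\<lambda>x. Dv x - Q (x$3)) \<le> C0 * dSO L \<delta> Dv"

end

theory Submission
  imports Defs
begin

text \<open>On the rod
  \<open>W' = V' - e\<^sub>3\<close> and \<open>Wm' = (Q - I) e\<^sub>3\<close>, so \<open>Ws' = V' - Q e\<^sub>3\<close>, which the rod
  decomposition bounds by \<open>C d / \<delta>\<close> in \<open>L\<^sup>2\<close>; since \<open>Ws(0) = 0\<close>, a Poincar\'e inequality
  on \<open>(-\<delta>, L)\<close> bounds \<open>Ws\<close> in \<open>H\<^sup>1\<close>. The horizontal components of \<open>Wm\<close> have derivative
  \<open>Q\<^sub>\<alpha>\<^sub>3\<close>, whose own derivative is bounded by \<open>C d / \<delta>\<^sup>2\<close>; two Poincar\'e steps anchored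
  at \<open>0\<close> give the \<open>H\<^sup>2\<close> bound. For the vertical component, the third column of a rotation
  is a unit vector, so \<open>1 - Q\<^sub>3\<^sub>3(t)\<close> is controlled by its value at \<open>0\<close> plus
  \<open>|Q(t) - Q(0)|\<^sup>2 \<le> |t| \<parallel>Q'\<parallel>\<^sup>2 \<le> C |t| d\<^sup>2 / \<delta>\<^sup>4\<close>: this is where the quadratic
  dependence on \<open>d\<close> comes from.\<close>

section \<open>Square-integrable functions\<close>

lemma set_integral_bounded_linear:
  fixes f :: "'a \<Rightarrow> 'b::{banach, second_countable_topology}"
    and T :: "'b \<Rightarrow> 'c::{banach, second_countable_topology}"
  assumes "set_integrable M S f" "bounded_linear T"
  shows "set_integrable M S (\<lambda>x. T (f x))"
    and "(LINT x:S|M. T (f x)) = T (LINT x:S|M. f x)"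
proof -
  have eq: "(\<lambda>x. indicator S x *\<^sub>R T (f x)) = (\<lambda>x. T (indicator S x *\<^sub>R f x))"
    using assms(2) by (simp add: linear_simps)
  show "set_integrable M S (\<lambda>x. T (f x))"
    using assms unfolding set_integrable_def eq by (rule integrable_bounded_linear[rotated])
  show "(LINT x:S|M. T (f x)) = T (LINT x:S|M. f x)"
    using assms unfolding set_integrable_def set_lebesgue_integral_def eq
    by (rule integral_bounded_linear[rotated])
qed

lemma set_borel_measurable_continuous_compose:
  fixes f :: "'a \<Rightarrow> 'b::real_normed_vector" and T :: "'b \<Rightarrow> 'c::real_normed_vector"
  assumes "set_borel_measurable M S f" "continuous_on UNIV T" "T 0 = 0"
  shows "set_borel_measurable M S (\<lambda>x. T (f x))"
proof -
  have eq: "(\<lambda>x. indicator S x *\<^sub>R T (f x)) = (\<lambda>x. T (indicator S x *\<^sub>R f x))"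
    using assms(3) by (auto simp: indicator_def)
  show ?thesis
    using assms(1) unfolding set_borel_measurable_def eq
    by (intro measurable_compose[OF _ borel_measurable_continuous_onI[OF assms(2)]])
qed

lemma set_integral_Ioo_Icc:
  fixes f :: "real \<Rightarrow> 'b::{banach, second_countable_topology}"
  shows "set_integrable lebesgue {a<..<b} f \<longleftrightarrow> set_integrable lebesgue {a..b} f"
    and "(LINT x:{a<..<b}|lebesgue. f x) = (LINT x:{a..b}|lebesgue. f x)"
  by (rule set_integrable_discrete_difference[where X="{a,b}"]; auto)
     (rule set_integral_discrete_difference[where X="{a,b}"]; auto)

lemma set_integral_mono_set_nonneg:
  fixes h :: "'a \<Rightarrow> real"
  assumes "set_integrable M B h" "A \<subseteq> B" "A \<in> sets M" "\<And>x. 0 \<le> h x"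
  shows "(LINT x:A|M. h x) \<le> (LINT x:B|M. h x)"
proof -
  have "set_integrable M A h" by (rule set_integrable_subset[OF assms(1,3,2)])
  then show ?thesis
    using assms unfolding set_lebesgue_integral_def set_integrable_def
    by (intro integral_mono) (auto simp: indicator_def)
qed

lemma set_integral_square_norm_nonneg: "0 \<le> (LINT x:S|M. (norm (f x))^2)"
  unfolding set_lebesgue_integral_def by (rule integral_nonneg_AE) (simp add: indicator_def)

lemma L2_on_continuous:
  fixes f :: "real \<Rightarrow> 'b::euclidean_space"
  assumes "continuous_on {a..b} f"
  shows "L2_on {a<..<b} f"
proof -
  have "continuous_on {a..b} (\<lambda>x. norm (f x)^2)"
    by (intro continuous_intros assms)
  then have "set_integrable lebesgue {a..b} f" "set_integrable lebesgue {a..b} (\<lambda>x. norm (f x)^2)"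
    using absolutely_integrable_continuous_real assms by auto
  then have "set_integrable lebesgue {a<..<b} f" "set_integrable lebesgue {a<..<b} (\<lambda>x. norm (f x)^2)"
    by (simp_all add: set_integral_Ioo_Icc(1))
  then show ?thesis
    unfolding L2_on_def set_borel_measurable_def set_integrable_def
    by (auto intro: borel_measurable_integrable)
qed

lemma L2_on_diff:
  fixes f h :: "'a::euclidean_space \<Rightarrow> 'b::euclidean_space"
  assumes "L2_on S f" "L2_on S h"
  shows "L2_on S (\<lambda>x. f x - h x)"
proof -
  have "set_borel_measurable lebesgue S f" "set_borel_measurable lebesgue S h"
    using assms unfolding L2_on_def by auto
  then have meas: "set_borel_measurable lebesgue S (\<lambda>x. f x - h x)"
    unfolding set_borel_measurable_def by (simp add: scaleR_diff_right)
  have meas2: "set_borel_measurable lebesgue S (\<lambda>x. norm (f x - h x)^2)"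
    by (rule set_borel_measurable_continuous_compose[OF meas]) (simp_all add: continuous_on_power continuous_on_norm continuous_on_id)
  have int: "set_integrable lebesgue S (\<lambda>x. 2 * norm (f x)^2 + 2 * norm (h x)^2)"
    using assms unfolding L2_on_def by auto
  have "norm (f x - h x)^2 \<le> 2 * norm (f x)^2 + 2 * norm (h x)^2" for x
  proof -
    have "norm (f x - h x)^2 \<le> (norm (f x) + norm (h x))^2"
      by (intro power_mono norm_triangle_ineq4) auto
    also have "\<dots> \<le> 2 * norm (f x)^2 + 2 * norm (h x)^2"
      using zero_le_power2[of "norm (f x) - norm (h x)"] by (simp add: power2_eq_square algebra_simps)
    finally show ?thesis .
  qed
  then have "set_integrable lebesgue S (\<lambda>x. norm (f x - h x)^2)"
    by (intro set_integrable_bound[OF int meas2] AE_I2) auto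
  with meas show ?thesis unfolding L2_on_def by auto
qed

lemma L2_on_bounded_linear:
  fixes f :: "'a::euclidean_space \<Rightarrow> 'b::euclidean_space" and T :: "'b \<Rightarrow> 'c::euclidean_space"
  assumes "L2_on S f" "bounded_linear T"
  shows "L2_on S (\<lambda>x. T (f x))"
proof -
  obtain K where K: "\<And>x. norm (T x) \<le> norm x * K"
    using bounded_linear.bounded[OF assms(2)] by blast
  have "set_borel_measurable lebesgue S f" using assms unfolding L2_on_def by auto
  then have meas: "set_borel_measurable lebesgue S (\<lambda>x. T (f x))"
    using assms(2) by (rule set_borel_measurable_continuous_compose[OF _ linear_continuous_on])
      (simp add: linear_simps(3)[OF assms(2)])
  have meas2: "set_borel_measurable lebesgue S (\<lambda>x. norm (T (f x))^2)"
    by (rule set_borel_measurable_continuous_compose[OF meas]) (simp_all add: continuous_on_power continuous_on_norm continuous_on_id)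
  have int: "set_integrable lebesgue S (\<lambda>x. K^2 * norm (f x)^2)"
    using assms unfolding L2_on_def by auto
  have "norm (T (f x))^2 \<le> K^2 * norm (f x)^2" for x
  proof -
    have "norm (T (f x))^2 \<le> (norm (f x) * K)^2" by (intro power_mono K) simp
    then show ?thesis by (simp add: power_mult_distrib mult.commute)
  qed
  then have "set_integrable lebesgue S (\<lambda>x. norm (T (f x))^2)"
    by (intro set_integrable_bound[OF int meas2] AE_I2) auto
  with meas show ?thesis unfolding L2_on_def by auto
qed

lemma L2norm_nonneg: "0 \<le> L2norm S f"
  unfolding L2norm_def by (simp add: set_integral_square_norm_nonneg)

lemma L2norm_le_bound:
  fixes f :: "'a::euclidean_space \<Rightarrow> 'b::euclidean_space"
  assumes S: "S \<in> sets lebesgue" "emeasure lebesgue S < \<infinity>" and B: "0 \<le> B"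
    and bound: "\<And>x. x \<in> S \<Longrightarrow> norm (f x) \<le> B"
  shows "L2norm S f \<le> sqrt (measure lebesgue S) * B"
proof -
  have "(LINT x:S|lebesgue. norm (f x)^2) \<le> measure lebesgue S * B^2"
  proof (cases "set_integrable lebesgue S (\<lambda>x. norm (f x)^2)")
    case True
    have "(LINT x:S|lebesgue. norm (f x)^2) \<le> (LINT x:S|lebesgue. B^2)"
      using True S bound
      by (intro set_integral_mono) (auto simp: set_integrable_def less_top[symmetric] power_mono)
    also have "\<dots> = measure lebesgue S * B^2"
      using S by (simp add: set_integral_const less_top[symmetric])
    finally show ?thesis .
  next
    case False
    then have "(LINT x:S|lebesgue. norm (f x)^2) = 0"
      unfolding set_integrable_def set_lebesgue_integral_def by (rule not_integrable_integral_eq)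
    then show ?thesis by simp
  qed
  then have "L2norm S f \<le> sqrt (measure lebesgue S * B^2)"
    unfolding L2norm_def by simp
  also have "\<dots> = sqrt (measure lebesgue S) * B"
    using B by (simp add: real_sqrt_mult)
  finally show ?thesis .
qed

lemma L2norm_mono:
  fixes f :: "'a::euclidean_space \<Rightarrow> 'b::euclidean_space" and h :: "'a \<Rightarrow> 'c::euclidean_space"
  assumes "L2_on S f" and bound: "\<And>x. x \<in> S \<Longrightarrow> norm (h x) \<le> norm (f x)"
  shows "L2norm S h \<le> L2norm S f"
proof -
  have "(LINT x:S|lebesgue. norm (h x)^2) \<le> (LINT x:S|lebesgue. norm (f x)^2)"
  proof (cases "set_integrable lebesgue S (\<lambda>x. norm (h x)^2)")
    case True
    show ?thesis
      using True assms(1) bound unfolding L2_on_def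
      by (intro set_integral_mono) (auto simp: power_mono)
  next
    case False
    then have "(LINT x:S|lebesgue. norm (h x)^2) = 0"
      unfolding set_integrable_def set_lebesgue_integral_def by (rule not_integrable_integral_eq)
    then show ?thesis by (simp add: set_integral_square_norm_nonneg)
  qed
  then show ?thesis unfolding L2norm_def by simp
qed

section \<open>Absolutely continuous functions with square-integrable derivative\<close>

lemma le_sqrt_mult_of_AM_bounds:
  fixes I N m :: real
  assumes AM: "\<And>l. l > 0 \<Longrightarrow> I \<le> (l * N + m / l) / 2" and "0 \<le> N" "0 \<le> m"
  shows "I \<le> sqrt m * sqrt N"
proof (cases "N > 0 \<and> m > 0")
  case True
  define l where "l = sqrt m / sqrt N"
  have "l * N = sqrt m * (N / sqrt N)" "m / l = (m / sqrt m) * sqrt N"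
    unfolding l_def by simp_all
  then have "l * N = sqrt m * sqrt N" "m / l = sqrt m * sqrt N"
    using assms(2,3) by (simp_all add: real_div_sqrt)
  moreover have "l > 0" using True by (simp add: l_def)
  ultimately show ?thesis using AM[of l] by (simp add: mult.commute)
next
  case False
  show ?thesis
  proof (rule ccontr)
    assume "\<not> ?thesis"
    then have I: "I > 0" using False assms(2,3) by auto
    show False
    proof (cases "N = 0")
      case True
      have "I \<le> (((m + 1) / I) * N + m / ((m + 1) / I)) / 2" by (rule AM) (use I \<open>0 \<le> m\<close> in auto)
      also have "\<dots> = I * m / (2 * (m + 1))" using True I \<open>0 \<le> m\<close> by (simp add: ac_simps)
      also have "\<dots> < I" using I \<open>0 \<le> m\<close> by (simp add: divide_less_eq)
      finally show False by simp
    next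
      case False
      then have "m = 0" using \<open>\<not> (N > 0 \<and> m > 0)\<close> assms(2,3) by auto
      have "I \<le> ((I / (N + 1)) * N + m / (I / (N + 1))) / 2" by (rule AM) (use I \<open>0 \<le> N\<close> in auto)
      also have "\<dots> = I * N / (2 * (N + 1))" using \<open>m = 0\<close> by simp
      also have "\<dots> < I" using I \<open>0 \<le> N\<close> by (simp add: divide_less_eq)
      finally show False by simp
    qed
  qed
qed

text \<open>Cauchy--Schwarz on an interval, obtained by integrating
  \<open>|g| \<le> (l |g|\<^sup>2 + 1/l) / 2\<close> and optimising over \<open>l > 0\<close>.\<close>
lemma set_integral_norm_le_sqrt_length_mult:
  fixes g :: "real \<Rightarrow> 'b::euclidean_space"
  assumes int: "set_integrable lebesgue {x..y} g"
    and int2: "set_integrable lebesgue {x..y} (\<lambda>t. norm (g t)^2)" and "x \<le> y"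
  shows "(LINT t:{x..y}|lebesgue. norm (g t))
           \<le> sqrt (y - x) * sqrt (LINT t:{x..y}|lebesgue. norm (g t)^2)"
proof (rule le_sqrt_mult_of_AM_bounds)
  fix l :: real assume l: "l > 0"
  have int_const: "set_integrable lebesgue {x..y} (\<lambda>t. 1 / (2 * l))"
    unfolding set_integrable_def
    by (intro integrable_scaleR_left integrable_real_indicator)
       (auto simp: less_top[symmetric] emeasure_lborel_Icc_eq)
  have int_sq: "set_integrable lebesgue {x..y} (\<lambda>t. (l / 2) * norm (g t)^2)"
    using int2 by simp
  have "(LINT t:{x..y}|lebesgue. norm (g t))
        \<le> (LINT t:{x..y}|lebesgue. (l / 2) * norm (g t)^2 + 1 / (2 * l))"
  proof (rule set_integral_mono[OF set_integrable_norm[OF int] set_integral_add(1)[OF int_sq int_const]])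
    fix t
    have "0 \<le> (l * norm (g t) - 1)^2" by simp
    then have "0 \<le> l * ((l / 2) * norm (g t)^2 + 1 / (2 * l) - norm (g t))"
      using l by (simp add: power2_eq_square algebra_simps)
    then show "norm (g t) \<le> (l / 2) * norm (g t)^2 + 1 / (2 * l)"
      using l by (simp add: zero_le_mult_iff)
  qed
  also have "\<dots> = (l * (LINT t:{x..y}|lebesgue. norm (g t)^2) + (y - x) / l) / 2"
    unfolding set_integral_add(2)[OF int_sq int_const] using \<open>x \<le> y\<close> l
    by (simp add: set_integral_const less_top[symmetric] field_simps)
  finally show "(LINT t:{x..y}|lebesgue. norm (g t))
     \<le> (l * (LINT t:{x..y}|lebesgue. norm (g t)^2) + (y - x) / l) / 2" .
qed (use \<open>x \<le> y\<close> set_integral_square_norm_nonneg in auto)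

lemma continuous_on_if_increments_integral:
  fixes f g :: "real \<Rightarrow> 'b::euclidean_space"
  assumes int: "set_integrable lebesgue {a..b} g"
    and incr: "\<And>x y. a \<le> x \<Longrightarrow> x \<le> y \<Longrightarrow> y \<le> b \<Longrightarrow> f y - f x = (LINT t:{x..y}|lebesgue. g t)"
  shows "continuous_on {a..b} f"
proof -
  have "f a + integral {a..t} g = f t" if "t \<in> {a..b}" for t
  proof -
    have "set_integrable lebesgue {a..t} g" by (rule set_integrable_subset[OF int]) (use that in auto)
    then have "(LINT s:{a..t}|lebesgue. g s) = integral {a..t} g"
      by (rule set_lebesgue_integral_eq_integral(2))
    with incr[of a t] that show ?thesis by (simp add: algebra_simps)
  qed
  moreover have "continuous_on {a..b} (\<lambda>t. f a + integral {a..t} g)"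
    using set_lebesgue_integral_eq_integral(1)[OF int]
    by (intro continuous_intros indefinite_integral_continuous_1)
  ultimately show ?thesis by (rule continuous_on_eq[rotated]) simp
qed

lemma H1_1dI:
  fixes f g :: "real \<Rightarrow> 'b::euclidean_space"
  assumes "L2_on {a<..<b} g" "set_integrable lebesgue {a..b} g"
    and "\<And>x y. a \<le> x \<Longrightarrow> x \<le> y \<Longrightarrow> y \<le> b \<Longrightarrow> f y - f x = (LINT t:{x..y}|lebesgue. g t)"
  shows "H1_1d a b f g"
  unfolding H1_1d_def
  using assms L2_on_continuous[OF continuous_on_if_increments_integral[OF assms(2,3)]] by blast

lemma H1_1d_continuous_on:
  fixes f g :: "real \<Rightarrow> 'b::euclidean_space"
  assumes "H1_1d a b f g"
  shows "continuous_on {a..b} f"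
  using assms unfolding H1_1d_def by (intro continuous_on_if_increments_integral) auto

lemma H1_1d_bounded_linear:
  fixes f g :: "real \<Rightarrow> 'b::euclidean_space" and T :: "'b \<Rightarrow> 'c::euclidean_space"
  assumes H: "H1_1d a b f g" and T: "bounded_linear T"
  shows "H1_1d a b (\<lambda>t. T (f t)) (\<lambda>t. T (g t))"
  unfolding H1_1d_def
proof (intro conjI allI impI)
  have int: "set_integrable lebesgue {a..b} g" using H unfolding H1_1d_def by auto
  show "L2_on {a<..<b} (\<lambda>t. T (f t))" "L2_on {a<..<b} (\<lambda>t. T (g t))"
    using H T L2_on_bounded_linear unfolding H1_1d_def by blast+
  show "set_integrable lebesgue {a..b} (\<lambda>t. T (g t))"
    by (rule set_integral_bounded_linear(1)[OF int T])
  fix x y assume xy: "a \<le> x" "x \<le> y" "y \<le> b"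
  have int_xy: "set_integrable lebesgue {x..y} g"
    by (rule set_integrable_subset[OF int]) (use xy in auto)
  have "T (f y) - T (f x) = T (f y - f x)" using T by (simp add: linear_simps)
  also have "\<dots> = T (LINT t:{x..y}|lebesgue. g t)" using H xy unfolding H1_1d_def by auto
  also have "\<dots> = (LINT t:{x..y}|lebesgue. T (g t))"
    by (rule set_integral_bounded_linear(2)[OF int_xy T, symmetric])
  finally show "T (f y) - T (f x) = (LINT t:{x..y}|lebesgue. T (g t))" .
qed

lemma H1_1d_diff_const:
  fixes f g :: "real \<Rightarrow> 'b::euclidean_space"
  assumes "H1_1d a b f g"
  shows "H1_1d a b (\<lambda>t. f t - c) g"
  using assms L2_on_diff[of "{a<..<b}" f "\<lambda>_. c"] L2_on_continuous[of a b "\<lambda>_. c"]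
  unfolding H1_1d_def by auto

lemma H1_1d_increment_le:
  fixes f g :: "real \<Rightarrow> 'b::euclidean_space"
  assumes H: "H1_1d a b f g" and "s \<in> {a..b}" "t \<in> {a..b}"
  shows "norm (f t - f s) \<le> sqrt \<bar>t - s\<bar> * L2norm {a<..<b} g"
proof -
  have ordered: "norm (f y - f x) \<le> sqrt (y - x) * L2norm {a<..<b} g"
    if xy: "a \<le> x" "x \<le> y" "y \<le> b" for x y
  proof -
    have int: "set_integrable lebesgue {a..b} g"
      and int2: "set_integrable lebesgue {a..b} (\<lambda>t. norm (g t)^2)"
      and incr: "f y - f x = (LINT t:{x..y}|lebesgue. g t)"
      using H xy set_integral_Ioo_Icc(1) unfolding H1_1d_def L2_on_def by auto
    have sub: "{x..y} \<subseteq> {a..b}" using xy by auto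
    have int_xy: "set_integrable lebesgue {x..y} g"
      and int2_xy: "set_integrable lebesgue {x..y} (\<lambda>t. norm (g t)^2)"
      by (rule set_integrable_subset[OF int _ sub] set_integrable_subset[OF int2 _ sub]; simp)+
    have "norm (f y - f x) \<le> (LINT t:{x..y}|lebesgue. norm (g t))"
      unfolding incr by (rule set_integral_norm_bound[OF int_xy])
    also have "\<dots> \<le> sqrt (y - x) * sqrt (LINT t:{x..y}|lebesgue. norm (g t)^2)"
      using xy by (intro set_integral_norm_le_sqrt_length_mult[OF int_xy int2_xy]) simp
    also have "\<dots> \<le> sqrt (y - x) * L2norm {a<..<b} g"
      unfolding L2norm_def set_integral_Ioo_Icc(2) using sub xy
      by (intro mult_left_mono real_sqrt_le_mono set_integral_mono_set_nonneg[OF int2]) auto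
    finally show ?thesis .
  qed
  show ?thesis
  proof (cases "s \<le> t")
    case True
    then show ?thesis using ordered[of s t] assms(2,3) by simp
  next
    case False
    then show ?thesis using ordered[of t s] assms(2,3) by (simp add: norm_minus_commute)
  qed
qed

lemma L2norm_le_of_H1_1d:
  fixes f g :: "real \<Rightarrow> 'b::euclidean_space"
  assumes H: "H1_1d a b f g" and s: "s \<in> {a..b}"
  shows "L2norm {a<..<b} f \<le> sqrt (b - a) * norm (f s) + (b - a) * L2norm {a<..<b} g"
proof -
  have ab: "a \<le> b" using s by auto
  have "norm (f t) \<le> norm (f s) + sqrt (b - a) * L2norm {a<..<b} g" if t: "t \<in> {a<..<b}" for t
  proof -
    have "norm (f t) \<le> norm (f s) + norm (f t - f s)" by (metis norm_triangle_sub add.commute)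
    also have "norm (f t - f s) \<le> sqrt \<bar>t - s\<bar> * L2norm {a<..<b} g"
      using t s by (intro H1_1d_increment_le[OF H]) auto
    also have "\<dots> \<le> sqrt (b - a) * L2norm {a<..<b} g"
      using s t by (intro mult_right_mono L2norm_nonneg) auto
    finally show ?thesis by simp
  qed
  then have "L2norm {a<..<b} f \<le> sqrt (b - a) * (norm (f s) + sqrt (b - a) * L2norm {a<..<b} g)"
    using ab L2norm_le_bound[of "{a<..<b}" "norm (f s) + sqrt (b - a) * L2norm {a<..<b} g" f]
    by (simp add: emeasure_lborel_Ioo L2norm_nonneg)
  also have "\<dots> = sqrt (b - a) * norm (f s) + (b - a) * L2norm {a<..<b} g"
    using ab by (simp add: distrib_left mult.assoc[symmetric])
  finally show ?thesis .
qed

lemma H1_norm_le_of_zero: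
  fixes f g :: "real \<Rightarrow> 'b::euclidean_space"
  assumes H: "H1_1d a b f g" and "s \<in> {a..b}" "f s = 0"
  shows "sqrt ((L2norm {a<..<b} f)^2 + (L2norm {a<..<b} g)^2) \<le> (b - a + 1) * L2norm {a<..<b} g"
proof -
  have "sqrt ((L2norm {a<..<b} f)^2 + (L2norm {a<..<b} g)^2) \<le> L2norm {a<..<b} f + L2norm {a<..<b} g"
    by (rule sqrt_sum_squares_le_sum) (simp_all add: L2norm_nonneg)
  also have "L2norm {a<..<b} f \<le> (b - a) * L2norm {a<..<b} g"
    using L2norm_le_of_H1_1d[OF assms(1,2)] assms(3) by simp
  finally show ?thesis by (simp add: algebra_simps)
qed

lemma H1_1d_interval_integral:
  fixes F :: "real \<Rightarrow> 'b::euclidean_space"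
  assumes cont: "continuous_on {a..b} F" and x0: "x0 \<in> {a..b}"
  shows "H1_1d a b (\<lambda>t. c + (LBINT s=ereal x0..ereal t. F s)) F"
proof (rule H1_1dI)
  have int: "set_integrable lebesgue {a..b} F"
    using absolutely_integrable_continuous_real[OF cont] by simp
  then show "set_integrable lebesgue {a..b} F" .
  show "L2_on {a<..<b} F" by (rule L2_on_continuous[OF cont])
  fix x y assume xy: "a \<le> x" "x \<le> y" "y \<le> b"
  have int_range: "interval_lebesgue_integrable lborel (ereal (min x0 (min x y))) (ereal (max x0 (max x y))) F"
    using xy x0 by (intro interval_integrable_continuous_on continuous_on_subset[OF cont]) auto
  have "(LBINT s=ereal x0..ereal x. F s) + (LBINT s=ereal x..ereal y. F s)
        = (LBINT s=ereal x0..ereal y. F s)"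
    by (rule interval_integral_sum) (use int_range in simp)
  moreover have "(LBINT s=ereal x..ereal y. F s) = (LINT t:{x..y}|lebesgue. F t)"
  proof -
    have "continuous_on {x..y} F" using xy by (intro continuous_on_subset[OF cont]) auto
    then have "(LBINT s=ereal x..ereal y. F s) = integral {x..y} F"
      using xy by (intro interval_integral_eq_integral borel_integrable_atLeastAtMost') auto
    also have "\<dots> = (LINT t:{x..y}|lebesgue. F t)"
      using xy by (intro set_lebesgue_integral_eq_integral(2)[symmetric] set_integrable_subset[OF int]) auto
    finally show ?thesis .
  qed
  ultimately show "c + (LBINT s=ereal x0..ereal y. F s) - (c + (LBINT s=ereal x0..ereal x. F s))
                   = (LINT t:{x..y}|lebesgue. F t)"
    by (simp add: algebra_simps)
qed

lemma H1_1d_diff: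
  fixes f g f' g' :: "real \<Rightarrow> 'b::euclidean_space"
  assumes H: "H1_1d a b f g" and H': "H1_1d a b f' g'"
  shows "H1_1d a b (\<lambda>t. f t - f' t) (\<lambda>t. g t - g' t)"
  unfolding H1_1d_def
proof (intro conjI allI impI)
  have int: "set_integrable lebesgue {a..b} g" and int': "set_integrable lebesgue {a..b} g'"
    using H H' unfolding H1_1d_def by auto
  show "L2_on {a<..<b} (\<lambda>t. f t - f' t)" "L2_on {a<..<b} (\<lambda>t. g t - g' t)"
    using H H' L2_on_diff unfolding H1_1d_def by blast+
  show "set_integrable lebesgue {a..b} (\<lambda>t. g t - g' t)"
    by (rule set_integral_diff(1)[OF int int'])
  fix x y assume xy: "a \<le> x" "x \<le> y" "y \<le> b"
  then have sub: "{x..y} \<subseteq> {a..b}" by auto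
  have "f y - f' y - (f x - f' x) = (f y - f x) - (f' y - f' x)" by (simp add: algebra_simps)
  also have "\<dots> = (LINT t:{x..y}|lebesgue. g t) - (LINT t:{x..y}|lebesgue. g' t)"
    using H H' xy unfolding H1_1d_def by auto
  also have "\<dots> = (LINT t:{x..y}|lebesgue. g t - g' t)"
    by (rule set_integral_diff(2)[symmetric];
        rule set_integrable_subset[OF int _ sub] set_integrable_subset[OF int' _ sub]; simp)
  finally show "f y - f' y - (f x - f' x) = (LINT t:{x..y}|lebesgue. g t - g' t)" .
qed

lemma H1_1d_scaleR_id: "H1_1d a b (\<lambda>t. t *\<^sub>R v) (\<lambda>t. v)"
proof (rule H1_1dI)
  show "L2_on {a<..<b} (\<lambda>t. v)" by (rule L2_on_continuous) simp
  show int: "set_integrable lebesgue {a..b} (\<lambda>t. v)"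
    unfolding set_integrable_def
    by (intro integrable_scaleR_left integrable_real_indicator)
       (auto simp: less_top[symmetric] emeasure_lborel_Icc_eq)
  fix x y :: real assume "a \<le> x" "x \<le> y" "y \<le> b"
  then show "y *\<^sub>R v - x *\<^sub>R v = (LINT t:{x..y}|lebesgue. v)"
    by (simp add: set_integral_const less_top[symmetric] scaleR_diff_left)
qed

section \<open>Matrices and rotations\<close>

lemma bounded_linear_matrix_vector_mult_left: "bounded_linear (\<lambda>A::real^'n^'m. A *v x)"
  unfolding linear_conv_bounded_linear[symmetric]
  by (rule linearI) (simp_all add: matrix_vector_mult_add_rdistrib scaleR_matrix_vector_assoc)

lemma bounded_linear_matrix_entry: "bounded_linear (\<lambda>A::real^'n^'m. A $ i $ j)"
  using bounded_linear_compose[OF bounded_linear_vec_nth bounded_linear_vec_nth] .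

lemma norm_matrix_entry_le: "norm ((A::real^'n^'m) $ i $ j) \<le> norm A"
  using Finite_Cartesian_Product.norm_nth_le[of "A $ i" j] Finite_Cartesian_Product.norm_nth_le[of A i]
  by simp

lemma matrix_vector_mult_axis_nth: "((A::real^'n^'m) *v axis j 1) $ i = A $ i $ j"
  by (simp add: matrix_vector_mult_basis column_def)

lemma SO3_third_column_sum_squares:
  fixes R :: "real^3^3"
  assumes "R \<in> SO3"
  shows "(R$1$3)^2 + (R$2$3)^2 + (R$3$3)^2 = 1"
proof -
  have "norm (column 3 R) = 1"
    using assms orthogonal_matrix_orthonormal_columns unfolding SO3_def by blast
  then have "norm (column 3 R)^2 = 1" by simp
  then show ?thesis
    unfolding power2_norm_eq_inner inner_vec_def by (simp add: sum_3 column_def power2_eq_square)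
qed

lemma third_column_sum_squares_le_norm:
  fixes A :: "real^3^3"
  shows "(A$1$3)^2 + (A$2$3)^2 + (A$3$3)^2 \<le> (norm A)^2"
proof -
  have "(norm A)^2 = (\<Sum>i\<in>UNIV. \<Sum>j\<in>UNIV. (A$i$j)^2)"
    unfolding power2_norm_eq_inner inner_vec_def by (simp add: power2_eq_square)
  then show ?thesis by (simp add: sum_3)
qed

text \<open>For a unit third column, \<open>|R e\<^sub>3 - e\<^sub>3|\<^sup>2 = 2 (1 - R\<^sub>3\<^sub>3)\<close>; compare
  \<open>R e\<^sub>3\<close> with \<open>e\<^sub>3\<close> through \<open>R\<^sub>0 e\<^sub>3\<close> using \<open>|u - w|\<^sup>2 \<le> 2 |u - v|\<^sup>2 + 2 |v - w|\<^sup>2\<close>.\<close>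
lemma SO3_entry33_deviation_le:
  fixes R R0 :: "real^3^3"
  assumes "R \<in> SO3" "R0 \<in> SO3"
  shows "\<bar>R$3$3 - 1\<bar> \<le> 2 * \<bar>R0$3$3 - 1\<bar> + (norm (R - R0))^2"
proof -
  have R: "(R$1$3)^2 + (R$2$3)^2 + (R$3$3)^2 = 1"
    and R0: "(R0$1$3)^2 + (R0$2$3)^2 + (R0$3$3)^2 = 1"
    using SO3_third_column_sum_squares assms by blast+
  have diff: "(R$1$3 - R0$1$3)^2 + (R$2$3 - R0$2$3)^2 + (R$3$3 - R0$3$3)^2 \<le> (norm (R - R0))^2"
    using third_column_sum_squares_le_norm[of "R - R0"] by simp
  have "R$3$3 \<le> 1" "R0$3$3 \<le> 1"
    using R R0 by (smt (verit) power2_le_imp_le zero_le_power2 one_power2)+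
  moreover have square_triangle: "(x - z)^2 \<le> 2 * (y - z)^2 + 2 * (x - y)^2" for x y z :: real
    using zero_le_power2[of "(y - z) - (x - y)"] by (simp add: power2_eq_square algebra_simps)
  then have "2 * (1 - R$3$3) \<le> 2 * (2 * (1 - R0$3$3)) + 2 * (norm (R - R0))^2"
    using square_triangle[of "R$1$3" 0 "R0$1$3"] square_triangle[of "R$2$3" 0 "R0$2$3"]
      square_triangle[of "R$3$3" 1 "R0$3$3"] R R0 diff
    by (simp add: power2_eq_square algebra_simps)
  ultimately show ?thesis by simp
qed

section \<open>Estimates on the rod\<close>

text \<open>The consequences of the rod decomposition used below, with \<open>d\<close> standing for
  \<open>d(v, B\<^sub>\<delta>)\<close>.\<close>
locale decomposed_rod =
  fixes C0 L \<delta> d :: real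
    and V dV :: "real \<Rightarrow> real^3" and Q dQ :: "real \<Rightarrow> real^3^3"
  assumes delta_pos: "0 < \<delta>" and delta_le: "\<delta> \<le> L" and d_nonneg: "0 \<le> d"
    and H1_V: "H1_1d (-\<delta>) L V dV"
    and H1_Q: "H1_1d (-\<delta>) L Q dQ"
    and Q_SO3: "\<And>t. t \<in> {-\<delta>..L} \<Longrightarrow> Q t \<in> SO3"
    and dQ_bound: "L2norm {-\<delta><..<L} dQ \<le> C0 / \<delta>^2 * d"
    and shear_bound: "L2norm {-\<delta><..<L} (\<lambda>t. dV t - Q t *v axis 3 1) \<le> C0 / \<delta> * d"
begin

definition W :: "real \<Rightarrow> real^3" where
  "W = (\<lambda>t. V t - t *\<^sub>R axis 3 1)"

definition Wm :: "real \<Rightarrow> real^3" where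
  "Wm = (\<lambda>t. W 0 + (LBINT s=0..ereal t. (Q s - mat 1) *v axis 3 1))"

definition Ws :: "real \<Rightarrow> real^3" where
  "Ws = (\<lambda>t. W t - Wm t)"

lemma zero_mem_interval: "0 \<in> {-\<delta>..L}"
  using delta_pos delta_le by auto

lemma interval_length_bounds: "L + \<delta> + 1 \<le> 2 * L + 1" "sqrt (L + \<delta>) \<le> 2 * L + 1"
proof -
  show "L + \<delta> + 1 \<le> 2 * L + 1" using delta_le by simp
  have "L + \<delta> \<le> (2 * L + 1) * 1" using delta_le by simp
  also have "\<dots> \<le> (2 * L + 1) * (2 * L + 1)" using delta_pos delta_le by (intro mult_left_mono) auto
  finally have "sqrt (L + \<delta>) \<le> sqrt ((2 * L + 1)^2)"
    unfolding power2_eq_square by (rule real_sqrt_le_mono)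
  then show "sqrt (L + \<delta>) \<le> 2 * L + 1" using delta_pos delta_le by simp
qed

lemma Wm_H1: "H1_1d (-\<delta>) L Wm (\<lambda>t. (Q t - mat 1) *v axis 3 1)"
proof -
  have "continuous_on {-\<delta>..L} (\<lambda>t. (Q t - mat 1) *v axis 3 1)"
    using H1_1d_continuous_on[OF H1_Q]
    by (intro linear_continuous_on_compose[OF _ bounded_linear.linear[OF
          bounded_linear_matrix_vector_mult_left]] continuous_intros)
  then show ?thesis
    unfolding Wm_def zero_ereal_def by (rule H1_1d_interval_integral[OF _ zero_mem_interval])
qed

lemma Wm_zero: "Wm 0 = W 0"
  by (simp add: Wm_def zero_ereal_def)

lemma Ws_H1: "H1_1d (-\<delta>) L Ws (\<lambda>t. dV t - Q t *v axis 3 1)"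
proof -
  have "H1_1d (-\<delta>) L Ws (\<lambda>t. (dV t - axis 3 1) - (Q t - mat 1) *v axis 3 1)"
    unfolding Ws_def W_def by (intro H1_1d_diff H1_V H1_1d_scaleR_id Wm_H1)
  moreover have "(dV t - axis 3 1) - (Q t - mat 1) *v axis 3 1 = dV t - Q t *v axis 3 1" for t
    by (simp add: matrix_vector_mult_diff_rdistrib)
  ultimately show ?thesis by simp
qed

lemma Ws_zero: "Ws 0 = 0"
  by (simp add: Ws_def Wm_zero)

lemma dQ_norm_le: "L2norm {-\<delta><..<L} dQ \<le> \<bar>C0\<bar> * (d / \<delta>^2)"
  using dQ_bound mult_right_mono[OF abs_ge_self, of "d / \<delta>^2" C0] d_nonneg delta_pos by simp

lemma Wm_component_H1:
  assumes "\<alpha> \<noteq> 3"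
  shows "H1_1d (-\<delta>) L (\<lambda>t. Wm t $ \<alpha> - W 0 $ \<alpha>) (\<lambda>t. Q t $ \<alpha> $ 3)"
  using H1_1d_diff_const[OF H1_1d_bounded_linear[OF Wm_H1 bounded_linear_vec_nth[of \<alpha>]]] assms
  by (simp add: matrix_vector_mult_diff_rdistrib matrix_vector_mult_axis_nth mat_def)

lemma Wm_vertical_H1: "H1_1d (-\<delta>) L (\<lambda>t. Wm t $ 3) (\<lambda>t. Q t $ 3 $ 3 - 1)"
  using H1_1d_bounded_linear[OF Wm_H1 bounded_linear_vec_nth[of 3]]
  by (simp add: matrix_vector_mult_diff_rdistrib matrix_vector_mult_axis_nth mat_def)

lemma Ws_estimate:
  assumes C: "(2 * L + 1) * \<bar>C0\<bar> \<le> C"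
  shows "\<exists>g. H1_1d (-\<delta>) L Ws g
           \<and> sqrt ((L2norm {-\<delta><..<L} Ws)^2 + (L2norm {-\<delta><..<L} g)^2) \<le> C / \<delta> * d"
proof (intro exI conjI)
  let ?g = "\<lambda>t. dV t - Q t *v axis 3 1"
  show "H1_1d (-\<delta>) L Ws ?g" by (rule Ws_H1)
  have "sqrt ((L2norm {-\<delta><..<L} Ws)^2 + (L2norm {-\<delta><..<L} ?g)^2)
        \<le> (L + \<delta> + 1) * L2norm {-\<delta><..<L} ?g"
    using H1_norm_le_of_zero[OF Ws_H1 zero_mem_interval Ws_zero] by simp
  also have "\<dots> \<le> (2 * L + 1) * (\<bar>C0\<bar> * (d / \<delta>))"
    using shear_bound mult_right_mono[OF abs_ge_self, of "d / \<delta>" C0] d_nonneg delta_pos delta_le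
    by (intro mult_mono interval_length_bounds) (auto simp: L2norm_nonneg)
  also have "\<dots> \<le> C / \<delta> * d"
    using mult_right_mono[OF C, of "d / \<delta>"] d_nonneg delta_pos by simp
  finally show "sqrt ((L2norm {-\<delta><..<L} Ws)^2 + (L2norm {-\<delta><..<L} ?g)^2) \<le> C / \<delta> * d" .
qed



lemma dQ_entry_L2norm_le: "L2norm {-\<delta><..<L} (\<lambda>t. dQ t $ i $ j) \<le> \<bar>C0\<bar> * (d / \<delta>^2)"
proof -
  have "L2norm {-\<delta><..<L} (\<lambda>t. dQ t $ i $ j) \<le> L2norm {-\<delta><..<L} dQ"
    using H1_Q unfolding H1_1d_def by (intro L2norm_mono norm_matrix_entry_le) auto
  then show ?thesis using dQ_norm_le by simp
qed

lemma Q_entry_L2norm_le: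
  "L2norm {-\<delta><..<L} (\<lambda>t. Q t $ i $ j)
     \<le> (2 * L + 1) * \<bar>Q 0 $ i $ j\<bar> + (2 * L + 1) * (\<bar>C0\<bar> * (d / \<delta>^2))"
proof -
  have "L2norm {-\<delta><..<L} (\<lambda>t. Q t $ i $ j)
        \<le> sqrt (L + \<delta>) * \<bar>Q 0 $ i $ j\<bar> + (L + \<delta>) * L2norm {-\<delta><..<L} (\<lambda>t. dQ t $ i $ j)"
    using L2norm_le_of_H1_1d[OF H1_1d_bounded_linear[OF H1_Q bounded_linear_matrix_entry]
        zero_mem_interval] by simp
  also have "\<dots> \<le> (2 * L + 1) * \<bar>Q 0 $ i $ j\<bar> + (2 * L + 1) * (\<bar>C0\<bar> * (d / \<delta>^2))"
  proof (rule add_mono)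
    show "sqrt (L + \<delta>) * \<bar>Q 0 $ i $ j\<bar> \<le> (2 * L + 1) * \<bar>Q 0 $ i $ j\<bar>"
      using interval_length_bounds(2) by (rule mult_right_mono) simp
    show "(L + \<delta>) * L2norm {-\<delta><..<L} (\<lambda>t. dQ t $ i $ j) \<le> (2 * L + 1) * (\<bar>C0\<bar> * (d / \<delta>^2))"
      using interval_length_bounds(1) dQ_entry_L2norm_le delta_pos
      by (intro mult_mono) (simp_all add: L2norm_nonneg)
  qed
  finally show ?thesis .
qed

lemma Wm_horizontal_estimate:
  assumes "\<alpha> \<noteq> 3" and C: "2 * (2 * L + 1)^2 \<le> C" "2 * (2 * L + 1)^2 * \<bar>C0\<bar> \<le> C"
  shows "\<exists>g h. H1_1d (-\<delta>) L (\<lambda>t. Wm t $ \<alpha> - W 0 $ \<alpha>) g \<and> H1_1d (-\<delta>) L g h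
           \<and> sqrt ((L2norm {-\<delta><..<L} (\<lambda>t. Wm t $ \<alpha> - W 0 $ \<alpha>))^2
                   + (L2norm {-\<delta><..<L} g)^2 + (L2norm {-\<delta><..<L} h)^2)
              \<le> C / \<delta>^2 * d + C * norm (Q 0 - mat 1)"
proof (intro exI conjI)
  define f g h where "f = (\<lambda>t. Wm t $ \<alpha> - W 0 $ \<alpha>)"
    and "g = (\<lambda>t. Q t $ \<alpha> $ 3)" and "h = (\<lambda>t. dQ t $ \<alpha> $ 3)"
  define M n0 G where "M = 2 * L + 1" and "n0 = norm (Q 0 - mat 1)" and "G = \<bar>C0\<bar> * (d / \<delta>^2)"
  show Hf: "H1_1d (-\<delta>) L (\<lambda>t. Wm t $ \<alpha> - W 0 $ \<alpha>) g"
    unfolding g_def by (rule Wm_component_H1[OF assms(1)])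
  show "H1_1d (-\<delta>) L g h"
    unfolding g_def h_def by (rule H1_1d_bounded_linear[OF H1_Q bounded_linear_matrix_entry])
  have M: "1 \<le> M" using delta_pos delta_le by (simp add: M_def)
  have nonneg: "0 \<le> n0" "0 \<le> G" using d_nonneg delta_pos by (simp_all add: n0_def G_def)
  have Lh: "L2norm {-\<delta><..<L} h \<le> G" unfolding h_def G_def by (rule dQ_entry_L2norm_le)
  have "\<bar>Q 0 $ \<alpha> $ 3\<bar> \<le> n0"
    using norm_matrix_entry_le[of "Q 0 - mat 1" \<alpha> 3] assms(1) by (simp add: n0_def mat_def)
  then have Lg: "L2norm {-\<delta><..<L} g \<le> M * n0 + M * G"
    using Q_entry_L2norm_le[of \<alpha> 3] M unfolding g_def M_def G_def
    by (smt (verit) mult_left_mono)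
  have "sqrt ((L2norm {-\<delta><..<L} f)^2 + (L2norm {-\<delta><..<L} g)^2 + (L2norm {-\<delta><..<L} h)^2)
        \<le> sqrt ((L2norm {-\<delta><..<L} f)^2 + (L2norm {-\<delta><..<L} g)^2) + L2norm {-\<delta><..<L} h"
    using sqrt_add_le_add_sqrt[of "(L2norm {-\<delta><..<L} f)^2 + (L2norm {-\<delta><..<L} g)^2"
        "(L2norm {-\<delta><..<L} h)^2"]
    by (simp add: L2norm_nonneg)
  also have "\<dots> \<le> (L + \<delta> + 1) * L2norm {-\<delta><..<L} g + G"
    using H1_norm_le_of_zero[OF Hf[folded f_def] zero_mem_interval] Lh by (simp add: f_def Wm_zero)
  also have "\<dots> \<le> M * (M * n0 + M * G) + G"
    using interval_length_bounds(1) Lg M by (intro add_mono mult_mono) (auto simp: M_def L2norm_nonneg)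
  also have "\<dots> = M^2 * n0 + M^2 * G + G" by (simp add: power2_eq_square algebra_simps)
  also have "\<dots> \<le> 2 * M^2 * n0 + 2 * M^2 * G"
  proof -
    have "G \<le> M^2 * G" using nonneg M mult_right_mono[of 1 "M^2" G] one_le_power[of M 2] by simp
    moreover have "0 \<le> M^2 * n0" using nonneg by simp
    ultimately show ?thesis by linarith
  qed
  also have "\<dots> \<le> C * n0 + C * (d / \<delta>^2)"
  proof (rule add_mono)
    show "2 * M^2 * n0 \<le> C * n0" using C(1) nonneg by (intro mult_right_mono) (simp_all add: M_def)
    have "2 * M^2 * G = (2 * M^2 * \<bar>C0\<bar>) * (d / \<delta>^2)" by (simp add: G_def)
    also have "\<dots> \<le> C * (d / \<delta>^2)"
      using C(2) d_nonneg delta_pos by (intro mult_right_mono) (simp_all add: M_def)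
    finally show "2 * M^2 * G \<le> C * (d / \<delta>^2)" .
  qed
  finally show "sqrt ((L2norm {-\<delta><..<L} (\<lambda>t. Wm t $ \<alpha> - W 0 $ \<alpha>))^2
                   + (L2norm {-\<delta><..<L} g)^2 + (L2norm {-\<delta><..<L} h)^2)
              \<le> C / \<delta>^2 * d + C * norm (Q 0 - mat 1)"
    by (simp add: f_def n0_def algebra_simps)
qed

lemma Q_entry33_deviation_le:
  assumes t: "t \<in> {-\<delta>..L}"
  shows "\<bar>Q t $ 3 $ 3 - 1\<bar> \<le> 2 * \<bar>Q 0 $ 3 $ 3 - 1\<bar> + \<bar>t\<bar> * (C0^2 * (d^2 / \<delta>^4))"
proof -
  have dQ2: "(L2norm {-\<delta><..<L} dQ)^2 \<le> C0^2 * (d^2 / \<delta>^4)"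
  proof -
    have "(L2norm {-\<delta><..<L} dQ)^2 \<le> (\<bar>C0\<bar> * (d / \<delta>^2))^2"
      by (intro power_mono dQ_norm_le L2norm_nonneg)
    also have "\<dots> = C0^2 * (d^2 / \<delta>^4)"
      by (simp add: power_mult_distrib power_divide flip: power_mult)
    finally show ?thesis .
  qed
  have "(norm (Q t - Q 0))^2 \<le> (sqrt \<bar>t\<bar> * L2norm {-\<delta><..<L} dQ)^2"
    using H1_1d_increment_le[OF H1_Q zero_mem_interval t] by (intro power_mono) simp_all
  also have "\<dots> = \<bar>t\<bar> * (L2norm {-\<delta><..<L} dQ)^2" by (simp add: power_mult_distrib)
  also have "\<dots> \<le> \<bar>t\<bar> * (C0^2 * (d^2 / \<delta>^4))" by (intro mult_left_mono dQ2) simp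
  finally show ?thesis
    using SO3_entry33_deviation_le[OF Q_SO3[OF t] Q_SO3[OF zero_mem_interval]] by linarith
qed

lemma deviation_e3_inner_e3: "((Q 0 - mat 1) *v axis 3 1) \<bullet> axis 3 1 = Q 0 $ 3 $ 3 - 1"
  by (simp add: inner_axis matrix_vector_mult_axis_nth mat_def)

lemma Wm_vertical_estimate:
  assumes C: "2 * (2 * L + 1)^2 \<le> C" "(2 * L + 1)^3 * C0^2 \<le> C"
  shows "\<exists>g. H1_1d (-\<delta>) L (\<lambda>t. Wm t $ 3 - Wm 0 $ 3) g
           \<and> sqrt ((L2norm {-\<delta><..<L} (\<lambda>t. Wm t $ 3 - Wm 0 $ 3))^2 + (L2norm {-\<delta><..<L} g)^2)
              \<le> C / \<delta>^4 * d^2 + C * \<bar>((Q 0 - mat 1) *v axis 3 1) \<bullet> axis 3 1\<bar>"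
proof (intro exI conjI)
  let ?f = "\<lambda>t. Wm t $ 3 - Wm 0 $ 3" and ?g = "\<lambda>t. Q t $ 3 $ 3 - 1"
  define M c E where "M = 2 * L + 1" and "c = \<bar>Q 0 $ 3 $ 3 - 1\<bar>" and "E = C0^2 * (d^2 / \<delta>^4)"
  show Hf: "H1_1d (-\<delta>) L ?f ?g" by (rule H1_1d_diff_const[OF Wm_vertical_H1])
  have M: "1 \<le> M" "L \<le> M" using delta_pos delta_le by (simp_all add: M_def)
  have nonneg: "0 \<le> c" "0 \<le> E" "0 \<le> L" using delta_pos delta_le by (simp_all add: c_def E_def)
  have "norm (?g t) \<le> 2 * c + L * E" if "t \<in> {-\<delta><..<L}" for t
  proof -
    have "\<bar>t\<bar> * E \<le> L * E" using that delta_le nonneg by (intro mult_right_mono) auto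
    then show ?thesis using Q_entry33_deviation_le[of t] that unfolding c_def E_def by auto
  qed
  then have Lg: "L2norm {-\<delta><..<L} ?g \<le> sqrt (L + \<delta>) * (2 * c + L * E)"
    using L2norm_le_bound[of "{-\<delta><..<L}" "2 * c + L * E" ?g] nonneg delta_pos
    by (simp add: emeasure_lborel_Ioo)
  have "sqrt ((L2norm {-\<delta><..<L} ?f)^2 + (L2norm {-\<delta><..<L} ?g)^2) \<le> (L + \<delta> + 1) * L2norm {-\<delta><..<L} ?g"
    using H1_norm_le_of_zero[OF Hf zero_mem_interval] by simp
  also have "\<dots> \<le> M * (M * (2 * c + L * E))"
  proof (rule mult_mono)
    show "L2norm {-\<delta><..<L} ?g \<le> M * (2 * c + L * E)"
      using Lg mult_right_mono[OF interval_length_bounds(2), of "2 * c + L * E"] nonneg by (simp add: M_def)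
  qed (use interval_length_bounds(1) M nonneg in \<open>simp_all add: M_def L2norm_nonneg\<close>)
  also have "\<dots> \<le> 2 * M^2 * c + M^3 * E"
  proof -
    have "M * M * L * E \<le> M * M * M * E" using M nonneg by (intro mult_right_mono mult_left_mono) auto
    then show ?thesis by (simp add: power2_eq_square power3_eq_cube algebra_simps)
  qed
  also have "\<dots> \<le> C * c + C * (d^2 / \<delta>^4)"
  proof (rule add_mono)
    show "2 * M^2 * c \<le> C * c" using C(1) nonneg by (intro mult_right_mono) (simp_all add: M_def)
    have "M^3 * E = (M^3 * C0^2) * (d^2 / \<delta>^4)" by (simp add: E_def)
    also have "\<dots> \<le> C * (d^2 / \<delta>^4)"
      using C(2) d_nonneg delta_pos by (intro mult_right_mono) (simp_all add: M_def)
    finally show "M^3 * E \<le> C * (d^2 / \<delta>^4)" .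
  qed
  finally show "sqrt ((L2norm {-\<delta><..<L} ?f)^2 + (L2norm {-\<delta><..<L} ?g)^2)
      \<le> C / \<delta>^4 * d^2 + C * \<bar>((Q 0 - mat 1) *v axis 3 1) \<bullet> axis 3 1\<bar>"
    unfolding deviation_e3_inner_e3 by (simp add: c_def algebra_simps)
qed



lemma Wm_vertical_deriv_estimate:
  assumes C: "3 \<le> C" "3 * C0^2 \<le> C"
  shows "\<exists>g. H1_1d (-\<delta>) L (\<lambda>t. Wm t $ 3) g
           \<and> L2norm {-\<delta><..<\<delta>} g
              \<le> C / (\<delta> powr (5/2)) * d^2 + C * \<delta> powr (1/2) * \<bar>((Q 0 - mat 1) *v axis 3 1) \<bullet> axis 3 1\<bar>"
proof (intro exI conjI)
  let ?g = "\<lambda>t. Q t $ 3 $ 3 - 1"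
  show "H1_1d (-\<delta>) L (\<lambda>t. Wm t $ 3) ?g" by (rule Wm_vertical_H1)
  define s c X where "s = sqrt \<delta>" and "c = \<bar>Q 0 $ 3 $ 3 - 1\<bar>" and "X = C0^2 * (d^2 / \<delta>^4)"
  have s: "0 < s" "\<delta> = s^2" using delta_pos by (simp_all add: s_def)
  have nonneg: "0 \<le> c" "0 \<le> X" by (simp_all add: c_def X_def)
  have "norm (?g t) \<le> 2 * c + \<delta> * X" if "t \<in> {-\<delta><..<\<delta>}" for t
  proof -
    have "\<bar>t\<bar> * X \<le> \<delta> * X" using that nonneg by (intro mult_right_mono) auto
    moreover have "t \<in> {-\<delta>..L}" using that delta_le by auto
    ultimately show ?thesis using Q_entry33_deviation_le[of t] unfolding c_def X_def by simp
  qed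
  then have "L2norm {-\<delta><..<\<delta>} ?g \<le> sqrt (2 * \<delta>) * (2 * c + \<delta> * X)"
    using L2norm_le_bound[of "{-\<delta><..<\<delta>}" "2 * c + \<delta> * X" ?g] nonneg delta_pos
    by (simp add: emeasure_lborel_Ioo)
  also have "\<dots> = (2 * sqrt 2) * s * c + sqrt 2 * C0^2 * (d^2 / s^5)"
  proof -
    have "sqrt (2 * \<delta>) = sqrt 2 * s" by (simp add: s_def real_sqrt_mult)
    then have "sqrt (2 * \<delta>) * (2 * c + \<delta> * X) = (2 * sqrt 2) * s * c + sqrt 2 * (s * (\<delta> * X))"
      by (simp add: algebra_simps)
    also have "s * (\<delta> * X) = C0^2 * (d^2 / s^5)"
      unfolding X_def s(2) using s(1) by (simp add: field_simps eval_nat_numeral)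
    finally show ?thesis by (simp add: mult.assoc)
  qed
  also have "\<dots> \<le> C * s * c + C * (d^2 / s^5)"
  proof (rule add_mono)
    have "sqrt 2 \<le> 3 / 2" by (rule real_le_lsqrt) (simp_all add: power2_eq_square)
    then show "(2 * sqrt 2) * s * c \<le> C * s * c"
      using C(1) s nonneg by (intro mult_right_mono) auto
    show "sqrt 2 * C0^2 * (d^2 / s^5) \<le> C * (d^2 / s^5)"
      using C(2) sqrt2_less_2 s mult_right_mono[of "sqrt 2" 3 "C0^2"]
      by (intro mult_right_mono) auto
  qed
  also have "\<dots> = C / (\<delta> powr (5/2)) * d^2 + C * \<delta> powr (1/2) * c"
  proof -
    have "\<delta> powr (1/2) = s" "\<delta> powr (5/2) = s^5"
      using powr_add[of \<delta> 2 "1/2"] delta_pos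
      by (simp_all add: s_def powr_half_sqrt eval_nat_numeral powr_numeral)
    then show ?thesis by simp
  qed
  finally show "L2norm {-\<delta><..<\<delta>} ?g
      \<le> C / (\<delta> powr (5/2)) * d^2 + C * \<delta> powr (1/2) * \<bar>((Q 0 - mat 1) *v axis 3 1) \<bullet> axis 3 1\<bar>"
    unfolding deviation_e3_inner_e3 c_def .
qed

end

lemma decomposed_rod_if_rod_decomposition:
  assumes "0 < \<delta>" "\<delta> \<le> L" "rod_decomposition C0 L \<delta> v Dv V dV Q dQ vb Dvb"
  shows "decomposed_rod C0 L \<delta> (dSO L \<delta> Dv) V dV Q dQ"
  using assms L2norm_nonneg unfolding decomposed_rod_def rod_decomposition_def dSO_def by auto

lemma rod_constant_dominates:
  fixes L C0 :: real
  assumes "0 \<le> L"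
  defines "C \<equiv> 3 * (2 * L + 1)^3 * (\<bar>C0\<bar> + 1)^2"
  shows "(2 * L + 1) * \<bar>C0\<bar> \<le> C" "2 * (2 * L + 1)^2 \<le> C" "2 * (2 * L + 1)^2 * \<bar>C0\<bar> \<le> C"
    "(2 * L + 1)^3 * C0^2 \<le> C" "3 \<le> C" "3 * C0^2 \<le> C"
proof -
  define M k where "M = 2 * L + 1" and "k = \<bar>C0\<bar> + 1"
  have M: "1 \<le> M" and k: "1 \<le> k" using assms(1) by (simp_all add: M_def k_def)
  have "\<bar>C0\<bar> \<le> k" by (simp add: k_def)
  then have C0k: "\<bar>C0\<bar> \<le> k" "C0^2 \<le> k^2" using power_mono[of "\<bar>C0\<bar>" k 2] by simp_all
  have M3: "M \<le> M^3" "M^2 \<le> M^3" "1 \<le> M^3"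
    using M by (simp_all add: power_increasing[of 1 3 M, simplified] power_increasing[of 2 3 M])
  have k2: "\<bar>C0\<bar> \<le> k^2" "1 \<le> k^2"
    using k C0k power_increasing[of 1 2 k] by simp_all
  have "M * \<bar>C0\<bar> \<le> M^3 * k^2" by (rule mult_mono[OF M3(1) k2(1)]) (use M in simp_all)
  moreover have "M^2 * 1 \<le> M^3 * k^2" by (rule mult_mono[OF M3(2) k2(2)]) (use M in simp_all)
  moreover have "M^2 * \<bar>C0\<bar> \<le> M^3 * k^2" by (rule mult_mono[OF M3(2) k2(1)]) (use M in simp_all)
  moreover have "M^3 * C0^2 \<le> M^3 * k^2" by (rule mult_left_mono[OF C0k(2)]) (use M in simp)
  moreover have "1 * 1 \<le> M^3 * k^2" by (rule mult_mono[OF M3(3) k2(2)]) (use M in simp_all)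
  moreover have "1 * C0^2 \<le> M^3 * k^2" by (rule mult_mono[OF M3(3) C0k(2)]) (use M in simp_all)
  moreover have "0 \<le> M^3 * k^2" using M by simp
  ultimately show "(2 * L + 1) * \<bar>C0\<bar> \<le> C" "2 * (2 * L + 1)^2 \<le> C" "2 * (2 * L + 1)^2 * \<bar>C0\<bar> \<le> C"
    "(2 * L + 1)^3 * C0^2 \<le> C" "3 \<le> C" "3 * C0^2 \<le> C"
    unfolding C_def M_def[symmetric] k_def[symmetric] by linarith+
qed

theorem lemma4p1:
  fixes \<omega> \<gamma>0 :: "(real^2) set" and L C0 :: real
  assumes "lipschitz_domain \<omega>"
    and "cball (0::real^2) 1 \<subseteq> \<omega>"
    and "openin (top_of_set (frontier \<omega>)) \<gamma>0"
    and "finite (components \<gamma>0)"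
    and "pairwise (\<lambda>A B. closure A \<inter> closure B = {}) (components \<gamma>0)"
    and "L > 0"
  shows "\<exists>C::real. \<forall>\<delta> v Dv V dV Q dQ vb Dvb.
     0 < \<delta> \<and> \<delta> \<le> L \<and> in_D \<omega> \<gamma>0 L \<delta> v Dv
     \<and> rod_decomposition C0 L \<delta> v Dv V dV Q dQ vb Dvb \<longrightarrow>
     (let d = dSO L \<delta> Dv;
          e3 = axis 3 1 :: real^3;
          W = (\<lambda>t. V t - t *\<^sub>R e3);
          Wm = (\<lambda>t::real. W 0 + (LBINT s=0..ereal t. (Q s - mat 1) *v e3));
          Ws = (\<lambda>t. W t - Wm t)
      in (\<exists>g. H1_1d (-\<delta>) L Ws g
              \<and> sqrt ((L2norm {-\<delta><..<L} Ws)^2 + (L2norm {-\<delta><..<L} g)^2) \<le> C / \<delta> * d)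
       \<and> (\<forall>\<alpha>\<in>{1::3, 2}. \<exists>g h.
              H1_1d (-\<delta>) L (\<lambda>t. Wm t $ \<alpha> - W 0 $ \<alpha>) g \<and> H1_1d (-\<delta>) L g h
              \<and> sqrt ((L2norm {-\<delta><..<L} (\<lambda>t. Wm t $ \<alpha> - W 0 $ \<alpha>))^2
                      + (L2norm {-\<delta><..<L} g)^2 + (L2norm {-\<delta><..<L} h)^2)
                 \<le> C / \<delta>^2 * d + C * norm (Q 0 - mat 1))
       \<and> (\<exists>g. H1_1d (-\<delta>) L (\<lambda>t. Wm t $ 3 - Wm 0 $ 3) g
              \<and> sqrt ((L2norm {-\<delta><..<L} (\<lambda>t. Wm t $ 3 - Wm 0 $ 3))^2 + (L2norm {-\<delta><..<L} g)^2)
                 \<le> C / \<delta>^4 * d^2 + C * \<bar>((Q 0 - mat 1) *v e3) \<bullet> e3\<bar>)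
       \<and> (\<exists>g. H1_1d (-\<delta>) L (\<lambda>t. Wm t $ 3) g
              \<and> L2norm {-\<delta><..<\<delta>} g
                 \<le> C / (\<delta> powr (5/2)) * d^2 + C * \<delta> powr (1/2) * \<bar>((Q 0 - mat 1) *v e3) \<bullet> e3\<bar>))"
proof (intro exI[of _ "3 * (2 * L + 1)^3 * (\<bar>C0\<bar> + 1)^2"] allI impI, goal_cases)
  case (1 \<delta> v Dv V dV Q dQ vb Dvb)
  then interpret decomposed_rod C0 L \<delta> "dSO L \<delta> Dv" V dV Q dQ
    by (intro decomposed_rod_if_rod_decomposition[of _ _ _ v _ _ _ _ _ vb Dvb]) auto
  note C = rod_constant_dominates[OF less_imp_le[OF \<open>L > 0\<close>], of C0]
  have "\<alpha> \<in> {1, 2} \<Longrightarrow> \<alpha> \<noteq> (3::3)" for \<alpha> by auto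
  then show ?case
    using Ws_estimate[OF C(1)] Wm_horizontal_estimate[OF _ C(2,3)]
      Wm_vertical_estimate[OF C(2,4)] Wm_vertical_deriv_estimate[OF C(5,6)]
    unfolding Let_def Ws_def Wm_def W_def by blast
qed

end
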